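(* Let $d\ge1$ and $1\le p<q<\infty$. Then the local Morrey space $\mathrm{L}\mathcal{M}^p_q(\mathbb{R}^d)$ satisfies $$C_{\rm NJ}(\mathrm{L}\mathcal{M}^p_q)=C_{\rm J}(\mathrm{L}\mathcal{M}^p_q)=2\quad\text{and}\quad C_{\rm DW}(\mathrm{L}\mathcal{M}^p_q)=4.$$
   Context: For $1\le p\le q<\infty$, the local Morrey space $\mathrm{L}\mathcal{M}^p_q=\mathrm{L}\mathcal{M}^p_q(\mathbb{R}^d)$ is the Banach space of all measurable functions $f$ on $\mathbb{R}^d$ with $$\|f\|_{\mathrm{L}\mathcal{M}^p_q}:=\sup_{r>0}|B(0,r)|^{\frac1q-\frac1p}\Big(\int_{B(0,r)}|f(y)|^p\,dy\Big)^{1/p}<\infty,$$ where $B(0,r)$ is the Euclidean ball of radius $r$ centered at the origin and $|B(0,r)|$ its Lebesgue measure. For a Banach space $X$: the von Neumann–Jordan constant is $C_{\rm NJ}(X):=\sup\Big\{\frac{\|x+y\|_X^2+\|x-y\|_X^2}{2(\|x\|_X^2+\|y\|_X^2)}: x,y\in X\setminus\{0\}\Big\}$; the James constant is $C_{\rm J}(X):=\sup\{\min\{\|x+y\|_X,\|x-y\|_X\}: x,y\in X,\ \|x\|_X=\|y\|_X=1\}$; the Dunkl–Williams constant is $C_{\rm DW}(X):=\sup\Big\{\frac{\|x\|_X+\|y\|_X}{\|x-y\|_X}\Big\|\frac{x}{\|x\|_X}-\frac{y}{\|y\|_X}\Big\|_X: x,y\in X,\ x\neq0,\ y\neq0,\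 x\neq y\Big\}$. *)

theory Defs
  imports "HOL-Analysis.Analysis"
begin

text \<open>Elements are functions; the space is understood modulo
  null functions, so "nonzero" / "distinct" are expressed through the (semi)norm.\<close>

definition LM_set :: "real \<Rightarrow> real \<Rightarrow> ('a::euclidean_space \<Rightarrow> real) set" where
  "LM_set p q = {f. f \<in> borel_measurable lebesgue \<and>
      (\<forall>r>0. set_integrable lebesgue (ball 0 r) (\<lambda>y. \<bar>f y\<bar> powr p)) \<and>
      bdd_above ((\<lambda>r. measure lebesgue (ball (0::'a) r) powr (1/q - 1/p) *
          (LINT y:ball 0 r|lebesgue. \<bar>f y\<bar> powr p) powr (1/p)) ` {0<..})}"

definition LM_norm :: "real \<Rightarrow> real \<Rightarrow> ('a::euclidean_space \<Rightarrow> real) \<Rightarrow> real" where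
  "LM_norm p q f = (SUP r\<in>{0<..}. measure lebesgue (ball (0::'a) r) powr (1/q - 1/p) *
          (LINT y:ball 0 r|lebesgue. \<bar>f y\<bar> powr p) powr (1/p))"

definition C_NJ :: "('a \<Rightarrow> real) set \<Rightarrow> (('a \<Rightarrow> real) \<Rightarrow> real) \<Rightarrow> ereal" where
  "C_NJ X N = (SUP xy \<in> {(x,y). x \<in> X \<and> y \<in> X \<and> N x \<noteq> 0 \<and> N y \<noteq> 0}.
     ereal (((N (\<lambda>t. fst xy t + snd xy t))^2 + (N (\<lambda>t. fst xy t - snd xy t))^2)
            / (2 * ((N (fst xy))^2 + (N (snd xy))^2))))"

definition C_J :: "('a \<Rightarrow> real) set \<Rightarrow> (('a \<Rightarrow> real) \<Rightarrow> real) \<Rightarrow> ereal" where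
  "C_J X N = (SUP xy \<in> {(x,y). x \<in> X \<and> y \<in> X \<and> N x = 1 \<and> N y = 1}.
     ereal (min (N (\<lambda>t. fst xy t + snd xy t)) (N (\<lambda>t. fst xy t - snd xy t))))"

definition C_DW :: "('a \<Rightarrow> real) set \<Rightarrow> (('a \<Rightarrow> real) \<Rightarrow> real) \<Rightarrow> ereal" where
  "C_DW X N = (SUP xy \<in> {(x,y). x \<in> X \<and> y \<in> X \<and> N x \<noteq> 0 \<and> N y \<noteq> 0
                                \<and> N (\<lambda>t. x t - y t) \<noteq> 0}.
     ereal ((N (fst xy) + N (snd xy)) / N (\<lambda>t. fst xy t - snd xy t)
       * N (\<lambda>t. fst xy t / N (fst xy) - snd xy t / N (snd xy))))"

end

theory Submission
  imports Defs
begin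

text \<open>
  The upper bounds \<open>C_NJ \<le> 2\<close>, \<open>C_J \<le> 2\<close>, \<open>C_DW \<le> 4\<close> hold in every seminormed space and follow
  from the triangle inequality, for \<open>C_DW\<close> via
  \<open>\<parallel>x/\<parallel>x\<parallel> - y/\<parallel>y\<parallel>\<parallel> \<le> 2 \<parallel>x - y\<parallel> / max \<parallel>x\<parallel> \<parallel>y\<parallel>\<close>. The three constants attain these values on
  explicit pairs in the plane with the maximum norm, so the lower bounds hold as soon as the space
  contains, for every \<open>\<epsilon> > 0\<close>, a \<open>(1 + \<epsilon>)\<close>-isometric copy of that plane.

  In the local Morrey space such copies are spanned by the normalized indicators
  \<open>u = |B\<^sub>1| powr (-1/q) \<cdot> \<chi>(B\<^sub>1)\<close> and \<open>v = |B\<^sub>R| powr (-1/q) \<cdot> \<chi>(B\<^sub>R - B\<^sub>1)\<close> for large \<open>R\<close>.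
  Each has Morrey quotient \<open>1\<close> at its own radius, whence
  \<open>\<parallel>a u + b v\<parallel> \<ge> max |a| |b| \<cdot> (1 - R powr -d) powr (1/p)\<close>. Since \<open>p < q\<close>, the quotient of a
  single atom decays on both sides of its own radius, so at each radius at most one atom contributes
  substantially, and \<open>\<parallel>a u + b v\<parallel> \<le> max |a| |b| \<cdot> (1 + R powr (-dp/2q) + R powr (-d(q-p)/2q)) powr (1/p)\<close>.
\<close>

section \<open>Minkowski's inequality\<close>

lemma powr_convex_combination_le:
  fixes p l s t :: real
  assumes "1 \<le> p" "0 \<le> s" "0 \<le> t" "0 \<le> l" "l \<le> 1"
  shows "(l * s + (1 - l) * t) powr p \<le> l * s powr p + (1 - l) * t powr p"
proof (cases "s > 0 \<and> t > 0")
  case True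
  then show ?thesis
    using convex_onD[OF powr_convex[OF \<open>1 \<le> p\<close>], of "1 - l" s t] assms by (auto simp: algebra_simps)
next
  case False
  have "c powr p * u powr p \<le> c * u powr p" if "0 \<le> c" "c \<le> 1" for c u :: real
    using that assms powr_mono'[of 1 p c] by (intro mult_right_mono) auto
  then show ?thesis
    using False assms by (cases "s = 0") (auto simp: powr_mult)
qed

text \<open>Integrated, with \<open>a\<close> and \<open>b\<close> the norms of the two summands, this is Minkowski's inequality.\<close>
lemma abs_add_powr_le:
  fixes p a b x y :: real
  assumes p: "1 \<le> p" and a: "0 < a" and b: "0 < b"
  shows "\<bar>x + y\<bar> powr p
    \<le> (a + b) powr p * (a / (a + b) * (\<bar>x\<bar> / a) powr p + b / (a + b) * (\<bar>y\<bar> / b) powr p)"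
proof -
  define l where "l = a / (a + b)"
  have l: "0 \<le> l" "l \<le> 1" and l': "1 - a / (a + b) = b / (a + b)"
    using a b by (auto simp: l_def field_simps)
  have "l * (\<bar>x\<bar> / a) = \<bar>x\<bar> / (a + b)" "(1 - l) * (\<bar>y\<bar> / b) = \<bar>y\<bar> / (a + b)"
    using a b by (simp add: l_def, simp add: l_def l')
  then have "(a + b) * (l * (\<bar>x\<bar> / a) + (1 - l) * (\<bar>y\<bar> / b)) = \<bar>x\<bar> + \<bar>y\<bar>"
    using a b by (simp add: add_divide_distrib[symmetric])
  then have "\<bar>x + y\<bar> \<le> (a + b) * (l * (\<bar>x\<bar> / a) + (1 - l) * (\<bar>y\<bar> / b))"
    by simp
  then have "\<bar>x + y\<bar> powr p \<le> ((a + b) * (l * (\<bar>x\<bar> / a) + (1 - l) * (\<bar>y\<bar> / b))) powr p"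
    using p by (intro powr_mono2) auto
  also have "\<dots> = (a + b) powr p * (l * (\<bar>x\<bar> / a) + (1 - l) * (\<bar>y\<bar> / b)) powr p"
    using a b l by (simp add: powr_mult)
  also have "\<dots> \<le> (a + b) powr p * (l * (\<bar>x\<bar> / a) powr p + (1 - l) * (\<bar>y\<bar> / b) powr p)"
    using a b l p by (intro mult_left_mono powr_convex_combination_le) auto
  finally show ?thesis
    by (simp only: l_def l')
qed

lemma integral_abs_add_powr_le:
  fixes f g :: "'b \<Rightarrow> real"
  assumes p: "1 \<le> p" and [measurable]: "f \<in> borel_measurable M" "g \<in> borel_measurable M"
    and fi: "integrable M (\<lambda>x. \<bar>f x\<bar> powr p)" and gi: "integrable M (\<lambda>x. \<bar>g x\<bar> powr p)"
    and a: "(\<integral>x. \<bar>f x\<bar> powr p \<partial>M) powr (1/p) < a" and b: "(\<integral>x. \<bar>g x\<bar> powr p \<partial>M) powr (1/p) < b"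
  shows "integrable M (\<lambda>x. \<bar>f x + g x\<bar> powr p)" and "(\<integral>x. \<bar>f x + g x\<bar> powr p \<partial>M) \<le> (a + b) powr p"
proof -
  define A where "A = (\<integral>x. \<bar>f x\<bar> powr p \<partial>M)"
  define B where "B = (\<integral>x. \<bar>g x\<bar> powr p \<partial>M)"
  have A: "A = (A powr (1/p)) powr p" and B: "B = (B powr (1/p)) powr p"
    using p by (simp_all add: A_def B_def powr_powr)
  have a0: "0 < a" and b0: "0 < b"
    using a b powr_ge_zero[of A "1/p"] powr_ge_zero[of B "1/p"] unfolding A_def B_def by linarith+
  let ?h = "\<lambda>x. (a + b) powr p * (a / (a + b) * (\<bar>f x\<bar> / a) powr p + b / (a + b) * (\<bar>g x\<bar> / b) powr p)"
  have hi: "integrable M ?h"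
    using fi gi a0 b0 by (simp add: powr_divide)
  have le: "\<bar>f x + g x\<bar> powr p \<le> ?h x" for x
    by (rule abs_add_powr_le[OF p a0 b0])
  show int: "integrable M (\<lambda>x. \<bar>f x + g x\<bar> powr p)"
  proof (rule Bochner_Integration.integrable_bound[OF hi])
    show "AE x in M. norm (\<bar>f x + g x\<bar> powr p) \<le> norm (?h x)"
      using le by (intro AE_I2) (auto intro: order_trans[OF _ abs_ge_self])
  qed measurable
  have "A \<le> a powr p" "B \<le> b powr p"
    using a b A B p unfolding A_def[symmetric] B_def[symmetric]
    by (metis powr_ge_zero powr_mono2 less_imp_le zero_le_one order_trans)+
  then have "A / a powr p \<le> 1" "B / b powr p \<le> 1"
    using a0 b0 by simp_all
  have "(\<integral>x. \<bar>f x + g x\<bar> powr p \<partial>M) \<le> (\<integral>x. ?h x \<partial>M)"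
    by (rule integral_mono[OF int hi le])
  also have "\<dots> = (a + b) powr p * (a / (a + b) * (A / a powr p) + b / (a + b) * (B / b powr p))"
    using fi gi a0 b0 by (simp add: powr_divide A_def B_def)
  also have "\<dots> \<le> (a + b) powr p * (a / (a + b) * 1 + b / (a + b) * 1)"
    using \<open>A / a powr p \<le> 1\<close> \<open>B / b powr p \<le> 1\<close> a0 b0
    by (intro mult_left_mono add_mono) auto
  also have "\<dots> = (a + b) powr p"
    using a0 b0 by (simp add: add_divide_distrib[symmetric])
  finally show "(\<integral>x. \<bar>f x + g x\<bar> powr p \<partial>M) \<le> (a + b) powr p" .
qed

lemma minkowski_integral_powr:
  fixes f g :: "'b \<Rightarrow> real"
  assumes p: "1 \<le> p" and f: "f \<in> borel_measurable M" and g: "g \<in> borel_measurable M"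
    and fi: "integrable M (\<lambda>x. \<bar>f x\<bar> powr p)" and gi: "integrable M (\<lambda>x. \<bar>g x\<bar> powr p)"
  shows "integrable M (\<lambda>x. \<bar>f x + g x\<bar> powr p)"
    and "(\<integral>x. \<bar>f x + g x\<bar> powr p \<partial>M) powr (1/p)
      \<le> (\<integral>x. \<bar>f x\<bar> powr p \<partial>M) powr (1/p) + (\<integral>x. \<bar>g x\<bar> powr p \<partial>M) powr (1/p)"
proof -
  define A where "A = (\<integral>x. \<bar>f x\<bar> powr p \<partial>M) powr (1/p)"
  define B where "B = (\<integral>x. \<bar>g x\<bar> powr p \<partial>M) powr (1/p)"
  note bound = integral_abs_add_powr_le[OF p f g fi gi, folded A_def B_def]
  show "integrable M (\<lambda>x. \<bar>f x + g x\<bar> powr p)"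
    using bound(1)[of "A + 1" "B + 1"] by simp
  \<comment> \<open>the norms need not be positive, so compare with the strictly larger \<open>A + e/2\<close>, \<open>B + e/2\<close>\<close>
  show "(\<integral>x. \<bar>f x + g x\<bar> powr p \<partial>M) powr (1/p) \<le> A + B"
  proof (rule field_le_epsilon)
    fix e :: real assume e: "0 < e"
    have "(\<integral>x. \<bar>f x + g x\<bar> powr p \<partial>M) \<le> (A + B + e) powr p"
      using bound(2)[of "A + e/2" "B + e/2"] e by (simp add: add_ac)
    then have "(\<integral>x. \<bar>f x + g x\<bar> powr p \<partial>M) powr (1/p) \<le> ((A + B + e) powr p) powr (1/p)"
      using p by (intro powr_mono2) auto
    also have "\<dots> = A + B + e"
      using p e by (simp add: A_def B_def powr_powr add_nonneg_nonneg)
    finally show "(\<integral>x. \<bar>f x + g x\<bar> powr p \<partial>M) powr (1/p) \<le> A + B + e" .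
  qed
qed

section \<open>Geometric constants of seminormed spaces of functions\<close>

locale function_seminorm =
  fixes X :: "('a \<Rightarrow> real) set" and N :: "('a \<Rightarrow> real) \<Rightarrow> real"
  assumes add_closed: "x \<in> X \<Longrightarrow> y \<in> X \<Longrightarrow> (\<lambda>t. x t + y t) \<in> X"
    and scale_closed: "x \<in> X \<Longrightarrow> (\<lambda>t. c * x t) \<in> X"
    and triangle: "x \<in> X \<Longrightarrow> y \<in> X \<Longrightarrow> N (\<lambda>t. x t + y t) \<le> N x + N y"
    and homogeneous: "x \<in> X \<Longrightarrow> N (\<lambda>t. c * x t) = \<bar>c\<bar> * N x"
begin

lemma minus_closed: "x \<in> X \<Longrightarrow> (\<lambda>t. - x t) \<in> X"
  using scale_closed[of x "-1"] by simp

lemma norm_minus: "x \<in> X \<Longrightarrow> N (\<lambda>t. - x t) = N x"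
  using homogeneous[of x "-1"] by simp

lemma diff_closed: "x \<in> X \<Longrightarrow> y \<in> X \<Longrightarrow> (\<lambda>t. x t - y t) \<in> X"
  using add_closed[OF _ minus_closed, of x y] by simp

lemma lincomb_closed: "u \<in> X \<Longrightarrow> v \<in> X \<Longrightarrow> (\<lambda>t. a * u t + b * v t) \<in> X"
  by (intro add_closed scale_closed)

lemma scale_divide_closed: "x \<in> X \<Longrightarrow> (\<lambda>t. x t / c) \<in> X"
  using scale_closed[of x "1 / c"] by simp

lemma norm_nonneg: "x \<in> X \<Longrightarrow> 0 \<le> N x"
  using triangle[OF _ minus_closed, of x x] homogeneous[of x 0] norm_minus[of x] by simp

lemma norm_normalized: "x \<in> X \<Longrightarrow> N x \<noteq> 0 \<Longrightarrow> N (\<lambda>t. x t / N x) = 1"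
  using homogeneous[of x "1 / N x"] norm_nonneg[of x] by (simp add: abs_div)

lemma triangle_diff: "x \<in> X \<Longrightarrow> y \<in> X \<Longrightarrow> N (\<lambda>t. x t - y t) \<le> N x + N y"
  using triangle[OF _ minus_closed, of x y] norm_minus[of y] by simp

lemma norm_diff_commute: "x \<in> X \<Longrightarrow> y \<in> X \<Longrightarrow> N (\<lambda>t. x t - y t) = N (\<lambda>t. y t - x t)"
  using norm_minus[OF diff_closed, of x y] by simp

lemma reverse_triangle: "x \<in> X \<Longrightarrow> y \<in> X \<Longrightarrow> \<bar>N x - N y\<bar> \<le> N (\<lambda>t. x t - y t)"
  using triangle[OF diff_closed, of x y y] triangle[OF diff_closed, of y x x]
    norm_diff_commute[of x y] by simp

lemma norm_normalized_diff_le: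
  assumes x: "x \<in> X" and y: "y \<in> X" and a: "0 < N x" and b: "0 < N y"
  shows "N (\<lambda>t. x t / N x - y t / N y) \<le> 2 * N (\<lambda>t. x t - y t) / N x"
proof -
  have split: "(\<lambda>t. x t / N x - y t / N y) = (\<lambda>t. (1 / N x) * (x t - y t) + (1 / N x - 1 / N y) * y t)"
    by (simp add: fun_eq_iff diff_divide_distrib algebra_simps)
  have "N (\<lambda>t. x t / N x - y t / N y)
      \<le> N (\<lambda>t. (1 / N x) * (x t - y t)) + N (\<lambda>t. (1 / N x - 1 / N y) * y t)"
    unfolding split by (intro triangle scale_closed diff_closed x y)
  also have "\<dots> = N (\<lambda>t. x t - y t) / N x + \<bar>1 / N x - 1 / N y\<bar> * N y"
    using homogeneous[OF diff_closed[OF x y], of "1 / N x"] homogeneous[OF y] a by simp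
  also have "\<bar>1 / N x - 1 / N y\<bar> * N y = \<bar>N x - N y\<bar> / N x"
    using a b by (simp add: field_simps abs_div)
  also have "N (\<lambda>t. x t - y t) / N x + \<bar>N x - N y\<bar> / N x \<le> 2 * N (\<lambda>t. x t - y t) / N x"
    using reverse_triangle[OF x y] a by (simp add: add_divide_distrib[symmetric] divide_right_mono)
  finally show ?thesis .
qed

lemma C_NJ_le_2: "C_NJ X N \<le> 2"
  unfolding C_NJ_def
proof (rule SUP_least, clarify, unfold fst_conv snd_conv)
  fix x y assume x: "x \<in> X" and y: "y \<in> X" and "N x \<noteq> 0"
  then have a: "0 < N x"
    using norm_nonneg by force
  have "(N (\<lambda>t. x t + y t))\<^sup>2 \<le> (N x + N y)\<^sup>2" "(N (\<lambda>t. x t - y t))\<^sup>2 \<le> (N x + N y)\<^sup>2"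
    using triangle[OF x y] triangle_diff[OF x y] norm_nonneg[OF add_closed[OF x y]]
      norm_nonneg[OF diff_closed[OF x y]] by (simp_all add: power_mono)
  then have "(N (\<lambda>t. x t + y t))\<^sup>2 + (N (\<lambda>t. x t - y t))\<^sup>2 \<le> 2 * (N x + N y)\<^sup>2"
    by linarith
  also have "\<dots> \<le> 2 * (2 * ((N x)\<^sup>2 + (N y)\<^sup>2))"
    using sum_squares_ge_zero[of "N x - N y" 0] by (simp add: power2_eq_square algebra_simps)
  finally have "((N (\<lambda>t. x t + y t))\<^sup>2 + (N (\<lambda>t. x t - y t))\<^sup>2) / (2 * ((N x)\<^sup>2 + (N y)\<^sup>2)) \<le> 2"
    using a by (simp add: divide_le_eq add_pos_nonneg)
  then show "ereal (((N (\<lambda>t. x t + y t))\<^sup>2 + (N (\<lambda>t. x t - y t))\<^sup>2) / (2 * ((N x)\<^sup>2 + (N y)\<^sup>2))) \<le> 2"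
    by (simp only: numeral_eq_ereal ereal_less_eq(3))
qed

lemma C_J_le_2: "C_J X N \<le> 2"
  unfolding C_J_def
proof (rule SUP_least, clarify, unfold fst_conv snd_conv)
  fix x y assume "x \<in> X" "y \<in> X" "N x = 1" "N y = 1"
  then have "min (N (\<lambda>t. x t + y t)) (N (\<lambda>t. x t - y t)) \<le> 2"
    using triangle[of x y] by linarith
  then show "ereal (min (N (\<lambda>t. x t + y t)) (N (\<lambda>t. x t - y t))) \<le> 2"
    by (simp only: numeral_eq_ereal ereal_less_eq(3))
qed

lemma C_DW_le_4: "C_DW X N \<le> 4"
  unfolding C_DW_def
proof (rule SUP_least, clarify, unfold fst_conv snd_conv)
  fix x y assume x: "x \<in> X" and y: "y \<in> X"
    and "N x \<noteq> 0" "N y \<noteq> 0" "N (\<lambda>t. x t - y t) \<noteq> 0"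
  then have a: "0 < N x" and b: "0 < N y" and d: "0 < N (\<lambda>t. x t - y t)"
    using norm_nonneg[OF x] norm_nonneg[OF y] norm_nonneg[OF diff_closed[OF x y]] by linarith+
  define M where "M = max (N x) (N y)"
  have M: "0 < M" "N x + N y \<le> 2 * M"
    using a b by (simp_all add: M_def)
  define w where "w = N (\<lambda>t. x t / N x - y t / N y)"
  have "w \<le> 2 * N (\<lambda>t. x t - y t) / N x"
    unfolding w_def by (rule norm_normalized_diff_le[OF x y a b])
  moreover have "w \<le> 2 * N (\<lambda>t. x t - y t) / N y"
  proof -
    have "(\<lambda>t. x t / N x) \<in> X" "(\<lambda>t. y t / N y) \<in> X"
      using x y by (simp_all add: scale_divide_closed)
    then have "w = N (\<lambda>t. y t / N y - x t / N x)"
      unfolding w_def by (rule norm_diff_commute)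
    also have "\<dots> \<le> 2 * N (\<lambda>t. y t - x t) / N y"
      by (rule norm_normalized_diff_le[OF y x b a])
    finally show ?thesis
      using norm_diff_commute[OF x y] by simp
  qed
  ultimately have "w \<le> 2 * N (\<lambda>t. x t - y t) / M"
    unfolding M_def by (cases "N x \<le> N y") (simp_all add: max_def)
  then have "(N x + N y) / N (\<lambda>t. x t - y t) * w \<le> (N x + N y) / N (\<lambda>t. x t - y t) * (2 * N (\<lambda>t. x t - y t) / M)"
    using a b d by (intro mult_left_mono) auto
  also have "\<dots> = 2 * (N x + N y) / M"
    using d by simp
  also have "\<dots> \<le> 4"
    using M by (simp add: divide_le_eq)
  finally show "ereal ((N x + N y) / N (\<lambda>t. x t - y t) * w) \<le> 4"
    by (simp only: numeral_eq_ereal ereal_less_eq(3))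
qed

end

definition linf2_pair ::
    "real \<Rightarrow> ('a \<Rightarrow> real) set \<Rightarrow> (('a \<Rightarrow> real) \<Rightarrow> real) \<Rightarrow> ('a \<Rightarrow> real) \<Rightarrow> ('a \<Rightarrow> real) \<Rightarrow> bool" where
  "linf2_pair \<epsilon> X N u v \<longleftrightarrow> u \<in> X \<and> v \<in> X \<and> (\<forall>a b.
     (1 - \<epsilon>) * max \<bar>a\<bar> \<bar>b\<bar> \<le> N (\<lambda>t. a * u t + b * v t) \<and>
     N (\<lambda>t. a * u t + b * v t) \<le> (1 + \<epsilon>) * max \<bar>a\<bar> \<bar>b\<bar>)"

definition almost_linf2 :: "('a \<Rightarrow> real) set \<Rightarrow> (('a \<Rightarrow> real) \<Rightarrow> real) \<Rightarrow> bool" where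
  "almost_linf2 X N \<longleftrightarrow> (\<forall>\<epsilon>>0. \<exists>u v. linf2_pair \<epsilon> X N u v)"

lemma linf2_pairD:
  assumes "linf2_pair \<epsilon> X N u v" and "\<epsilon> < 1"
  shows "u \<in> X" and "v \<in> X"
    and "(1 - \<epsilon>) * \<bar>a\<bar> \<le> N (\<lambda>t. a * u t + b * v t)"
    and "(1 - \<epsilon>) * \<bar>b\<bar> \<le> N (\<lambda>t. a * u t + b * v t)"
    and "N (\<lambda>t. a * u t + b * v t) \<le> (1 + \<epsilon>) * max \<bar>a\<bar> \<bar>b\<bar>"
proof -
  have lo: "(1 - \<epsilon>) * max \<bar>a\<bar> \<bar>b\<bar> \<le> N (\<lambda>t. a * u t + b * v t)"
    using assms(1) unfolding linf2_pair_def by blast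
  show "u \<in> X" "v \<in> X" "N (\<lambda>t. a * u t + b * v t) \<le> (1 + \<epsilon>) * max \<bar>a\<bar> \<bar>b\<bar>"
    using assms(1) unfolding linf2_pair_def by blast+
  show "(1 - \<epsilon>) * \<bar>a\<bar> \<le> N (\<lambda>t. a * u t + b * v t)"
    using order_trans[OF mult_left_mono[OF max.cobounded1] lo] assms(2) by simp
  show "(1 - \<epsilon>) * \<bar>b\<bar> \<le> N (\<lambda>t. a * u t + b * v t)"
    using order_trans[OF mult_left_mono[OF max.cobounded2] lo] assms(2) by simp
qed

lemma ereal_le_if_tendsto_at_right_0:
  fixes G :: "real \<Rightarrow> real" and C :: ereal
  assumes "(G \<longlongrightarrow> L) (at_right 0)" and "\<And>\<epsilon>. 0 < \<epsilon> \<Longrightarrow> \<epsilon> < 1 \<Longrightarrow> ereal (G \<epsilon>) \<le> C"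
  shows "ereal L \<le> C"
proof (rule tendsto_upperbound)
  show "((\<lambda>\<epsilon>. ereal (G \<epsilon>)) \<longlongrightarrow> ereal L) (at_right 0)"
    using assms(1) by (rule tendsto_ereal)
  show "\<forall>\<^sub>F \<epsilon> in at_right 0. ereal (G \<epsilon>) \<le> C"
    by (rule eventually_at_rightI[of 0 1]) (use assms(2) in auto)
qed simp

lemma mult_le_mult_of_nonneg_lower:
  fixes a b c d :: real
  assumes "0 \<le> a" "a \<le> b" "c \<le> d" "0 \<le> d"
  shows "a * c \<le> b * d"
proof (cases "c \<le> 0")
  case True
  then have "a * c \<le> 0"
    using assms(1) by (simp add: mult_nonneg_nonpos)
  also have "0 \<le> b * d"
    using assms by simp
  finally show ?thesis .
next
  case False
  then show ?thesis
    using assms by (intro mult_mono) auto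
qed

context function_seminorm
begin

lemma C_NJ_ge_of_linf2_pair:
  assumes pair: "linf2_pair \<epsilon> X N u v" and \<epsilon>: "0 < \<epsilon>" "\<epsilon> < 1"
  shows "ereal (2 * ((1 - \<epsilon>) / (1 + \<epsilon>))\<^sup>2) \<le> C_NJ X N"
proof -
  note uv = linf2_pairD(1,2)[OF pair \<epsilon>(2)]
    and lo1 = linf2_pairD(3)[OF pair \<epsilon>(2)] and lo2 = linf2_pairD(4)[OF pair \<epsilon>(2)]
    and up = linf2_pairD(5)[OF pair \<epsilon>(2)]
  define x where "x = (\<lambda>t. 1 * u t + 1 * v t)"
  define y where "y = (\<lambda>t. 1 * u t + (-1) * v t)"
  have xy: "x \<in> X" "y \<in> X"
    unfolding x_def y_def by (intro lincomb_closed uv)+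
  have sum: "(\<lambda>t. x t + y t) = (\<lambda>t. 2 * u t + 0 * v t)"
    and diff: "(\<lambda>t. x t - y t) = (\<lambda>t. 0 * u t + 2 * v t)"
    by (simp_all add: x_def y_def fun_eq_iff)
  have Nx: "1 - \<epsilon> \<le> N x" "N x \<le> 1 + \<epsilon>" and Ny: "1 - \<epsilon> \<le> N y" "N y \<le> 1 + \<epsilon>"
    using lo1[of 1 1] up[of 1 1] lo1[of 1 "-1"] up[of 1 "-1"] by (simp_all add: x_def y_def)
  have "2 * (1 - \<epsilon>) \<le> N (\<lambda>t. x t + y t)"
    unfolding sum using lo1[of 2 0] by (simp add: mult.commute)
  moreover have "2 * (1 - \<epsilon>) \<le> N (\<lambda>t. x t - y t)"
    unfolding diff using lo2[where a=0 and b=2] by (simp add: mult.commute)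
  ultimately have "(2 * (1 - \<epsilon>))\<^sup>2 + (2 * (1 - \<epsilon>))\<^sup>2 \<le> (N (\<lambda>t. x t + y t))\<^sup>2 + (N (\<lambda>t. x t - y t))\<^sup>2"
    using \<epsilon> by (intro add_mono power_mono) auto
  moreover have "2 * ((N x)\<^sup>2 + (N y)\<^sup>2) \<le> 2 * ((1 + \<epsilon>)\<^sup>2 + (1 + \<epsilon>)\<^sup>2)"
    using Nx Ny \<epsilon> by (intro mult_left_mono add_mono power_mono) auto
  moreover have "0 < 2 * ((N x)\<^sup>2 + (N y)\<^sup>2)"
    using Nx \<epsilon> by (intro mult_pos_pos add_pos_nonneg) auto
  ultimately have "((2 * (1 - \<epsilon>))\<^sup>2 + (2 * (1 - \<epsilon>))\<^sup>2) / (2 * ((1 + \<epsilon>)\<^sup>2 + (1 + \<epsilon>)\<^sup>2))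
      \<le> ((N (\<lambda>t. x t + y t))\<^sup>2 + (N (\<lambda>t. x t - y t))\<^sup>2) / (2 * ((N x)\<^sup>2 + (N y)\<^sup>2))"
    by (intro frac_le) auto
  also have "((2 * (1 - \<epsilon>))\<^sup>2 + (2 * (1 - \<epsilon>))\<^sup>2) / (2 * ((1 + \<epsilon>)\<^sup>2 + (1 + \<epsilon>)\<^sup>2))
      = 2 * ((1 - \<epsilon>) / (1 + \<epsilon>))\<^sup>2"
    unfolding power_mult_distrib power_divide by simp
  finally have "ereal (2 * ((1 - \<epsilon>) / (1 + \<epsilon>))\<^sup>2)
      \<le> ereal (((N (\<lambda>t. x t + y t))\<^sup>2 + (N (\<lambda>t. x t - y t))\<^sup>2) / (2 * ((N x)\<^sup>2 + (N y)\<^sup>2)))"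
    by simp
  also have "\<dots> \<le> C_NJ X N"
    unfolding C_NJ_def using xy Nx Ny \<epsilon> by (intro SUP_upper2[of "(x, y)"]) auto
  finally show ?thesis .
qed

lemma C_J_ge_of_linf2_pair:
  assumes pair: "linf2_pair \<epsilon> X N u v" and \<epsilon>: "0 < \<epsilon>" "\<epsilon> < 1"
  shows "ereal (2 * (1 - \<epsilon>) / (1 + \<epsilon>)) \<le> C_J X N"
proof -
  note uv = linf2_pairD(1,2)[OF pair \<epsilon>(2)]
    and lo1 = linf2_pairD(3)[OF pair \<epsilon>(2)] and lo2 = linf2_pairD(4)[OF pair \<epsilon>(2)]
    and up = linf2_pairD(5)[OF pair \<epsilon>(2)]
  define n1 where "n1 = N (\<lambda>t. u t + v t)"
  define n2 where "n2 = N (\<lambda>t. u t - v t)"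
  define x where "x = (\<lambda>t. (u t + v t) / n1)"
  define y where "y = (\<lambda>t. (u t - v t) / n2)"
  have n: "1 - \<epsilon> \<le> n1" "n1 \<le> 1 + \<epsilon>" "1 - \<epsilon> \<le> n2" "n2 \<le> 1 + \<epsilon>"
    using lo1[of 1 1] up[of 1 1] lo1[of 1 "-1"] up[of 1 "-1"] by (simp_all add: n1_def n2_def)
  have xy: "x \<in> X" "y \<in> X" and Nx: "N x = 1" and Ny: "N y = 1"
    using n \<epsilon> uv unfolding x_def y_def n1_def n2_def
    by (simp_all add: norm_normalized scale_divide_closed add_closed diff_closed)
  have pos: "0 < 1 / n1 + 1 / n2"
    using n \<epsilon> by (simp add: add_pos_pos)
  have "(\<lambda>t. x t + y t) = (\<lambda>t. (1 / n1 + 1 / n2) * u t + (1 / n1 - 1 / n2) * v t)"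
    by (simp add: fun_eq_iff x_def y_def add_divide_distrib diff_divide_distrib algebra_simps)
  then have "(1 - \<epsilon>) * (1 / n1 + 1 / n2) \<le> N (\<lambda>t. x t + y t)"
    using lo1[of "1 / n1 + 1 / n2" "1 / n1 - 1 / n2"] pos by simp
  moreover have "(\<lambda>t. x t - y t) = (\<lambda>t. (1 / n1 - 1 / n2) * u t + (1 / n1 + 1 / n2) * v t)"
    by (simp add: fun_eq_iff x_def y_def add_divide_distrib diff_divide_distrib algebra_simps)
  then have "(1 - \<epsilon>) * (1 / n1 + 1 / n2) \<le> N (\<lambda>t. x t - y t)"
    using lo2[where a="1 / n1 - 1 / n2" and b="1 / n1 + 1 / n2"] pos by simp
  moreover have "2 * (1 - \<epsilon>) / (1 + \<epsilon>) \<le> (1 - \<epsilon>) * (1 / n1 + 1 / n2)"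
  proof -
    have "2 / (1 + \<epsilon>) \<le> 1 / n1 + 1 / n2"
      using n \<epsilon> frac_le[of 1 1 n1 "1 + \<epsilon>"] frac_le[of 1 1 n2 "1 + \<epsilon>"] by simp
    then show ?thesis
      using \<epsilon> mult_left_mono[of "2 / (1 + \<epsilon>)" "1 / n1 + 1 / n2" "1 - \<epsilon>"] by (simp add: mult.commute)
  qed
  ultimately have "ereal (2 * (1 - \<epsilon>) / (1 + \<epsilon>)) \<le> ereal (min (N (\<lambda>t. x t + y t)) (N (\<lambda>t. x t - y t)))"
    by simp
  also have "\<dots> \<le> C_J X N"
    unfolding C_J_def using xy Nx Ny by (intro SUP_upper2[of "(x, y)"]) auto
  finally show ?thesis .
qed

text \<open>In coordinates of \<open>\<ell>\<^sup>\<infinity>\<^sub>2\<close>: \<open>x = (e - 1, 1)\<close> and \<open>y = (e/2 - 1, 1 - e/2)\<close> have the small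
  difference \<open>x - y = (e/2, e/2)\<close>, while \<open>x/\<parallel>x\<parallel> - y/\<parallel>y\<parallel> \<approx> (e, 0)\<close>.\<close>
lemma C_DW_witness_bounds:
  assumes pair: "linf2_pair \<epsilon> X N u v" and \<epsilon>: "0 < \<epsilon>" "\<epsilon> < 1" and e: "0 < e" "e < 1"
    and x_def: "x = (\<lambda>t. (e - 1) * u t + 1 * v t)" and y_def: "y = (\<lambda>t. (e / 2 - 1) * u t + (1 - e / 2) * v t)"
  shows "x \<in> X" "y \<in> X" "0 < N x" "0 < N y" "0 < N (\<lambda>t. x t - y t)"
    and "(1 - \<epsilon>) * (2 - e / 2) / ((1 + \<epsilon>) * (e / 2)) \<le> (N x + N y) / N (\<lambda>t. x t - y t)"
    and "(e - 1) + (1 - \<epsilon>) / (1 + \<epsilon>) \<le> N (\<lambda>t. x t / N x - y t / N y)"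
proof -
  note uv = linf2_pairD(1,2)[OF pair \<epsilon>(2)]
    and lo1 = linf2_pairD(3)[OF pair \<epsilon>(2)] and lo2 = linf2_pairD(4)[OF pair \<epsilon>(2)]
    and up = linf2_pairD(5)[OF pair \<epsilon>(2)]
  define c where "c = 1 - e / 2"
  have c: "0 < c" "c < 1" "2 - e / 2 = 1 + c"
    using e by (simp_all add: c_def)
  have y: "y = (\<lambda>t. (- c) * u t + c * v t)"
    by (simp add: y_def c_def)
  show "x \<in> X" "y \<in> X"
    unfolding x_def y_def by (intro lincomb_closed uv)+
  have diff: "(\<lambda>t. x t - y t) = (\<lambda>t. (e / 2) * u t + (e / 2) * v t)"
    by (simp add: fun_eq_iff x_def y_def algebra_simps)
  have Nx: "1 - \<epsilon> \<le> N x"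
    using lo2[where a="e - 1" and b=1] by (simp add: x_def)
  have Ny: "(1 - \<epsilon>) * c \<le> N y" "N y \<le> (1 + \<epsilon>) * c"
    using lo1[where a="- c" and b=c] up[of "- c" c] c by (simp_all add: y)
  have Nd: "(1 - \<epsilon>) * (e / 2) \<le> N (\<lambda>t. x t - y t)" "N (\<lambda>t. x t - y t) \<le> (1 + \<epsilon>) * (e / 2)"
    unfolding diff using lo1[where a="e / 2" and b="e / 2"] up[of "e / 2" "e / 2"] e by simp_all
  have "0 < (1 - \<epsilon>) * c" "0 < (1 - \<epsilon>) * (e / 2)"
    using \<epsilon> c e by simp_all
  then show pos: "0 < N x" "0 < N y" "0 < N (\<lambda>t. x t - y t)"
    using Nx Ny(1) Nd(1) \<epsilon> by linarith+
  have "(1 - \<epsilon>) * (1 + c) = (1 - \<epsilon>) + (1 - \<epsilon>) * c"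
    by (simp add: distrib_left)
  then have "(1 - \<epsilon>) * (1 + c) \<le> N x + N y"
    using Nx Ny(1) by linarith
  then show "(1 - \<epsilon>) * (2 - e / 2) / ((1 + \<epsilon>) * (e / 2)) \<le> (N x + N y) / N (\<lambda>t. x t - y t)"
    unfolding c(3) using pos Nd(2) by (intro frac_le) auto
  have "(e - 1) / (1 - \<epsilon>) \<le> (e - 1) / N x"
    using Nx \<epsilon> e by (intro divide_left_mono_neg) auto
  moreover have "1 / (1 + \<epsilon>) \<le> c / N y"
    using Ny c \<epsilon> pos by (simp add: divide_simps mult.commute)
  moreover have "(e - 1) + (1 - \<epsilon>) / (1 + \<epsilon>) = (1 - \<epsilon>) * ((e - 1) / (1 - \<epsilon>) + 1 / (1 + \<epsilon>))"
    using \<epsilon> by (simp add: distrib_left)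
  ultimately have "(e - 1) + (1 - \<epsilon>) / (1 + \<epsilon>) \<le> (1 - \<epsilon>) * ((e - 1) / N x + c / N y)"
    using \<epsilon> by (simp add: mult_left_mono)
  also have "\<dots> \<le> N (\<lambda>t. ((e - 1) / N x + c / N y) * u t + (1 / N x - c / N y) * v t)"
    using order_trans[OF mult_left_mono[OF abs_ge_self] lo1[of "(e - 1) / N x + c / N y" "1 / N x - c / N y"]] \<epsilon>
    by simp
  also have "(\<lambda>t. ((e - 1) / N x + c / N y) * u t + (1 / N x - c / N y) * v t) = (\<lambda>t. x t / N x - y t / N y)"
    by (simp add: fun_eq_iff x_def y diff_divide_distrib add_divide_distrib algebra_simps)
  finally show "(e - 1) + (1 - \<epsilon>) / (1 + \<epsilon>) \<le> N (\<lambda>t. x t / N x - y t / N y)" .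
qed

lemma C_DW_ge_of_linf2_pair:
  assumes pair: "linf2_pair \<epsilon> X N u v" and \<epsilon>: "0 < \<epsilon>" "\<epsilon> < 1" and e: "0 < e" "e < 1"
  shows "ereal ((1 - \<epsilon>) * (2 - e / 2) / ((1 + \<epsilon>) * (e / 2)) * ((e - 1) + (1 - \<epsilon>) / (1 + \<epsilon>)))
    \<le> C_DW X N"
proof -
  define x where "x = (\<lambda>t. (e - 1) * u t + 1 * v t)"
  define y where "y = (\<lambda>t. (e / 2 - 1) * u t + (1 - e / 2) * v t)"
  note w = C_DW_witness_bounds[OF pair \<epsilon> e x_def y_def]
  have "(1 - \<epsilon>) * (2 - e / 2) / ((1 + \<epsilon>) * (e / 2)) * ((e - 1) + (1 - \<epsilon>) / (1 + \<epsilon>))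
      \<le> (N x + N y) / N (\<lambda>t. x t - y t) * N (\<lambda>t. x t / N x - y t / N y)"
    using w \<epsilon> e norm_nonneg[OF diff_closed[OF scale_divide_closed scale_divide_closed]]
    by (intro mult_le_mult_of_nonneg_lower) auto
  also have "\<dots> \<le> C_DW X N"
    unfolding C_DW_def using w by (intro SUP_upper2[of "(x, y)"]) auto
  finally show ?thesis
    by simp
qed

lemma C_NJ_ge_2:
  assumes "almost_linf2 X N"
  shows "2 \<le> C_NJ X N"
proof -
  have bound: "ereal (2 * ((1 - \<epsilon>) / (1 + \<epsilon>))\<^sup>2) \<le> C_NJ X N" if "0 < \<epsilon>" "\<epsilon> < 1" for \<epsilon>
    using assms that C_NJ_ge_of_linf2_pair unfolding almost_linf2_def by blast
  have lim: "((\<lambda>\<epsilon>. 2 * ((1 - \<epsilon>) / (1 + \<epsilon>))\<^sup>2) \<longlongrightarrow> 2 * ((1 - 0) / (1 + 0))\<^sup>2) (at_right (0::real))"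
    by (intro tendsto_intros) auto
  show ?thesis
    using ereal_le_if_tendsto_at_right_0[OF lim bound] by simp
qed

lemma C_J_ge_2:
  assumes "almost_linf2 X N"
  shows "2 \<le> C_J X N"
proof -
  have bound: "ereal (2 * (1 - \<epsilon>) / (1 + \<epsilon>)) \<le> C_J X N" if "0 < \<epsilon>" "\<epsilon> < 1" for \<epsilon>
    using assms that C_J_ge_of_linf2_pair unfolding almost_linf2_def by blast
  have lim: "((\<lambda>\<epsilon>. 2 * (1 - \<epsilon>) / (1 + \<epsilon>)) \<longlongrightarrow> 2 * (1 - 0) / (1 + 0)) (at_right (0::real))"
    by (intro tendsto_intros) auto
  show ?thesis
    using ereal_le_if_tendsto_at_right_0[OF lim bound] by simp
qed

lemma C_DW_ge_4:
  assumes "almost_linf2 X N"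
  shows "4 \<le> C_DW X N"
proof -
  have bound: "ereal (4 - e) \<le> C_DW X N" if e: "0 < e" "e < 1" for e
  proof -
    let ?G = "\<lambda>\<epsilon>. (1 - \<epsilon>) * (2 - e / 2) / ((1 + \<epsilon>) * (e / 2)) * ((e - 1) + (1 - \<epsilon>) / (1 + \<epsilon>))"
    have bound: "ereal (?G \<epsilon>) \<le> C_DW X N" if "0 < \<epsilon>" "\<epsilon> < 1" for \<epsilon>
      using assms that e C_DW_ge_of_linf2_pair unfolding almost_linf2_def by blast
    have "(?G \<longlongrightarrow> (1 - 0) * (2 - e / 2) / ((1 + 0) * (e / 2)) * ((e - 1) + (1 - 0) / (1 + 0))) (at_right 0)"
      using e by (intro tendsto_intros) auto
    moreover have "(1 - 0) * (2 - e / 2) / ((1 + 0) * (e / 2)) * ((e - 1) + (1 - 0) / (1 + 0)) = 4 - e"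
      using e by (simp add: field_simps)
    ultimately have lim: "(?G \<longlongrightarrow> 4 - e) (at_right 0)"
      by (simp only:)
    show ?thesis
      by (rule ereal_le_if_tendsto_at_right_0[OF lim bound])
  qed
  have lim: "((\<lambda>e. 4 - e) \<longlongrightarrow> 4 - 0) (at_right (0::real))"
    by (intro tendsto_intros)
  show ?thesis
    using ereal_le_if_tendsto_at_right_0[OF lim bound] by simp
qed

end

section \<open>The local Morrey space\<close>

definition LM_quotient :: "real \<Rightarrow> real \<Rightarrow> ('a::euclidean_space \<Rightarrow> real) \<Rightarrow> real \<Rightarrow> real" where
  "LM_quotient p q f r = measure lebesgue (ball (0::'a) r) powr (1/q - 1/p) *
     (LINT y:ball 0 r|lebesgue. \<bar>f y\<bar> powr p) powr (1/p)"

lemma ball_in_sets_lebesgue [measurable]: "ball (x::'a::euclidean_space) r \<in> sets lebesgue"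
  by simp

lemma LM_norm_eq_SUP: "LM_norm p q f = (SUP r\<in>{0<..}. LM_quotient p q f r)"
  by (simp add: LM_norm_def LM_quotient_def)

lemma LM_set_iff: "f \<in> LM_set p q \<longleftrightarrow> f \<in> borel_measurable lebesgue \<and>
    (\<forall>r>0. set_integrable lebesgue (ball 0 r) (\<lambda>y. \<bar>f y\<bar> powr p)) \<and>
    bdd_above (LM_quotient p q f ` {0<..})"
  by (simp add: LM_set_def LM_quotient_def)

lemma LM_quotient_nonneg: "0 \<le> LM_quotient p q f r"
  by (simp add: LM_quotient_def)

lemma LM_quotient_le_norm: "f \<in> LM_set p q \<Longrightarrow> 0 < r \<Longrightarrow> LM_quotient p q f r \<le> LM_norm p q f"
  unfolding LM_norm_eq_SUP by (rule cSUP_upper) (auto simp: LM_set_iff)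

lemma LM_norm_le: "(\<And>r. 0 < r \<Longrightarrow> LM_quotient p q f r \<le> B) \<Longrightarrow> LM_norm p q f \<le> B"
  unfolding LM_norm_eq_SUP by (rule cSUP_least) auto

lemma LM_setI:
  assumes "f \<in> borel_measurable lebesgue"
    and "\<And>r. 0 < r \<Longrightarrow> set_integrable lebesgue (ball 0 r) (\<lambda>y. \<bar>f y\<bar> powr p)"
    and "\<And>r. 0 < r \<Longrightarrow> LM_quotient p q f r \<le> B"
  shows "f \<in> LM_set p q"
  using assms unfolding LM_set_iff bdd_above_def by blast

lemma LM_scale:
  assumes f: "f \<in> LM_set p q" and p: "0 < p"
  shows "(\<lambda>t. c * f t) \<in> LM_set p q" and "LM_norm p q (\<lambda>t. c * f t) = \<bar>c\<bar> * LM_norm p q f"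
proof -
  have pw: "\<bar>c * f y\<bar> powr p = \<bar>c\<bar> powr p * \<bar>f y\<bar> powr p" for y
    by (simp add: abs_mult powr_mult)
  have quotient: "LM_quotient p q (\<lambda>t. c * f t) r = \<bar>c\<bar> * LM_quotient p q f r" for r
  proof -
    have "(LINT y:ball 0 r|lebesgue. \<bar>c * f y\<bar> powr p) powr (1/p)
        = (\<bar>c\<bar> powr p * (LINT y:ball 0 r|lebesgue. \<bar>f y\<bar> powr p)) powr (1/p)"
      unfolding pw by simp
    also have "\<dots> = \<bar>c\<bar> * (LINT y:ball 0 r|lebesgue. \<bar>f y\<bar> powr p) powr (1/p)"
      using p by (simp add: powr_mult powr_powr)
    finally show ?thesis
      unfolding LM_quotient_def by simp
  qed
  show cf: "(\<lambda>t. c * f t) \<in> LM_set p q"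
  proof (rule LM_setI)
    show "(\<lambda>t. c * f t) \<in> borel_measurable lebesgue"
      using f by (auto simp: LM_set_iff)
    show "set_integrable lebesgue (ball 0 r) (\<lambda>y. \<bar>c * f y\<bar> powr p)" if "0 < r" for r
      unfolding pw using f that by (auto simp: LM_set_iff)
    show "LM_quotient p q (\<lambda>t. c * f t) r \<le> \<bar>c\<bar> * LM_norm p q f" if "0 < r" for r
      unfolding quotient using LM_quotient_le_norm[OF f that] by (rule mult_left_mono) simp
  qed
  show "LM_norm p q (\<lambda>t. c * f t) = \<bar>c\<bar> * LM_norm p q f"
  proof (rule antisym)
    show "LM_norm p q (\<lambda>t. c * f t) \<le> \<bar>c\<bar> * LM_norm p q f"
      by (rule LM_norm_le) (simp add: quotient mult_left_mono LM_quotient_le_norm[OF f])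
    show "\<bar>c\<bar> * LM_norm p q f \<le> LM_norm p q (\<lambda>t. c * f t)"
    proof (cases "c = 0")
      case True
      then show ?thesis
        using LM_quotient_le_norm[OF cf, of 1] LM_quotient_nonneg[of p q "\<lambda>t. c * f t" 1] by simp
    next
      case False
      have "LM_norm p q f \<le> LM_norm p q (\<lambda>t. c * f t) / \<bar>c\<bar>"
        using LM_quotient_le_norm[OF cf] False by (intro LM_norm_le) (simp add: quotient field_simps)
      then show ?thesis
        using False by (simp add: field_simps)
    qed
  qed
qed


lemma LM_add:
  assumes f: "f \<in> LM_set p q" and g: "g \<in> LM_set p q" and p: "1 \<le> p"
  shows "(\<lambda>t. f t + g t) \<in> LM_set p q" and "LM_norm p q (\<lambda>t. f t + g t) \<le> LM_norm p q f + LM_norm p q g"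
proof -
  have fm: "f \<in> borel_measurable lebesgue" and gm: "g \<in> borel_measurable lebesgue"
    using f g by (auto simp: LM_set_iff)
  have ball: "set_integrable lebesgue (ball 0 r) (\<lambda>y. \<bar>f y + g y\<bar> powr p) \<and>
      (LINT y:ball 0 r|lebesgue. \<bar>f y + g y\<bar> powr p) powr (1/p)
      \<le> (LINT y:ball 0 r|lebesgue. \<bar>f y\<bar> powr p) powr (1/p) + (LINT y:ball 0 r|lebesgue. \<bar>g y\<bar> powr p) powr (1/p)"
    if r: "0 < r" for r
  proof -
    have restrict: "\<bar>indicator (ball 0 r) y * h y\<bar> powr p = indicator (ball 0 r) y *\<^sub>R \<bar>h y\<bar> powr p"
      for h :: "'a \<Rightarrow> real" and y
      using p by (auto simp: indicator_def)
    let ?F = "\<lambda>y. indicator (ball 0 r) y * f y" and ?G = "\<lambda>y. indicator (ball 0 r) y * g y"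
    have "integrable lebesgue (\<lambda>y. \<bar>?F y\<bar> powr p)" "integrable lebesgue (\<lambda>y. \<bar>?G y\<bar> powr p)"
      unfolding restrict using f g r by (auto simp: LM_set_iff set_integrable_def)
    moreover have "?F \<in> borel_measurable lebesgue" "?G \<in> borel_measurable lebesgue"
      using fm gm by measurable
    moreover have "\<bar>?F y + ?G y\<bar> powr p = indicator (ball 0 r) y *\<^sub>R \<bar>f y + g y\<bar> powr p" for y
      using restrict[where h="\<lambda>y. f y + g y"] by (simp add: distrib_left)
    ultimately show ?thesis
      using minkowski_integral_powr[OF p, of ?F lebesgue ?G]
      unfolding restrict set_integrable_def set_lebesgue_integral_def by simp
  qed
  have quotient: "LM_quotient p q (\<lambda>t. f t + g t) r \<le> LM_norm p q f + LM_norm p q g" if r: "0 < r" for r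
  proof -
    have "LM_quotient p q (\<lambda>t. f t + g t) r \<le> LM_quotient p q f r + LM_quotient p q g r"
      using ball[OF r] unfolding LM_quotient_def by (simp add: distrib_left[symmetric] mult_left_mono)
    also have "\<dots> \<le> LM_norm p q f + LM_norm p q g"
      using LM_quotient_le_norm[OF f r] LM_quotient_le_norm[OF g r] by (rule add_mono)
    finally show ?thesis .
  qed
  show "(\<lambda>t. f t + g t) \<in> LM_set p q"
  proof (rule LM_setI)
    show "(\<lambda>t. f t + g t) \<in> borel_measurable lebesgue"
      using fm gm by measurable
    show "set_integrable lebesgue (ball 0 r) (\<lambda>y. \<bar>f y + g y\<bar> powr p)" if "0 < r" for r
      using ball[OF that] by blast
  qed (rule quotient)
  show "LM_norm p q (\<lambda>t. f t + g t) \<le> LM_norm p q f + LM_norm p q g"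
    by (rule LM_norm_le[OF quotient])
qed

lemma LM_function_seminorm:
  assumes "1 \<le> p"
  shows "function_seminorm (LM_set p q :: ('a::euclidean_space \<Rightarrow> real) set) (LM_norm p q)"
  using assms by unfold_locales (simp_all add: LM_add LM_scale)

section \<open>Normalized indicators of a ball and a shell\<close>

lemma powr_min_one_le:
  fixes s t :: real
  assumes s: "0 < s" "s < 1" and t: "0 < t"
  shows "t powr (s - 1) * min t 1 \<le> 1" and "t powr (s - 1) * min t 1 \<le> t powr s"
    and "t powr (s - 1) * min t 1 \<le> t powr (s - 1)"
proof -
  have ts: "t powr (s - 1) * t = t powr s"
    using powr_add[of t "s - 1" 1] t by simp
  show le_s: "t powr (s - 1) * min t 1 \<le> t powr s"
    using ts t by (metis min.cobounded1 mult_left_mono powr_ge_zero)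
  show le_s1: "t powr (s - 1) * min t 1 \<le> t powr (s - 1)"
    using t by (simp add: mult_left_le)
  show "t powr (s - 1) * min t 1 \<le> 1"
  proof (cases "t \<le> 1")
    case True
    then show ?thesis
      using le_s powr_le1[of s t] s t by linarith
  next
    case False
    then show ?thesis
      using le_s1 powr_mono[of "s - 1" 0 t] s by simp
  qed
qed

text \<open>With \<open>t = |B\<^sub>r| / |B\<^sub>1|\<close> and \<open>T = R\<^sup>d\<close>, the two summands bound the contributions of the
  two atoms to the \<open>p\<close>-th power of the Morrey quotient at radius \<open>r\<close>.\<close>
lemma powr_min_one_sum_le:
  fixes s t T :: real
  assumes s: "0 < s" "s < 1" and t: "0 < t" and T: "1 < T"
  shows "t powr (s - 1) * min t 1 + (t / T) powr (s - 1) * min (t / T) 1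
    \<le> 1 + T powr (- s / 2) + T powr ((s - 1) / 2)"
proof (cases "t \<le> T powr (1/2)")
  case True
  have "(t / T) powr s \<le> (T powr (1/2) / T) powr s"
    using True t T s by (intro powr_mono2 divide_right_mono) auto
  also have "T powr (1/2) / T = T powr (- 1/2)"
    using T powr_diff[of T "1/2" 1] by simp
  finally have "(t / T) powr (s - 1) * min (t / T) 1 \<le> T powr (- s / 2)"
    using powr_min_one_le(2)[OF s, of "t / T"] t T by (simp add: powr_powr)
  then show ?thesis
    using powr_min_one_le(1)[OF s t] powr_ge_zero[of T "(s - 1) / 2"] by linarith
next
  case False
  have "t powr (s - 1) \<le> (T powr (1/2)) powr (s - 1)"
    using False T s by (intro powr_mono2') auto
  then have "t powr (s - 1) * min t 1 \<le> T powr ((s - 1) / 2)"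
    using powr_min_one_le(3)[OF s t] by (simp add: powr_powr)
  then show ?thesis
    using powr_min_one_le(1)[OF s divide_pos_pos[OF t, of T]] T powr_ge_zero[of T "- s / 2"] by linarith
qed

lemma powr_min_rescale:
  fixes s v W :: real
  assumes v: "0 < v" and W: "0 < W"
  shows "v powr (s - 1) * (W powr (- s) * min v W) = (v / W) powr (s - 1) * min (v / W) 1"
proof -
  have "min v W = W * min (v / W) 1"
    using W by (auto simp: min_def field_simps)
  moreover have "v powr (s - 1) = (v / W) powr (s - 1) * W powr (s - 1)"
    using v W by (simp add: powr_divide)
  moreover have "W powr (s - 1) * W powr (- s) * W = 1"
    using W by (simp add: powr_add[symmetric] powr_diff)
  ultimately show ?thesis
    by (simp add: algebra_simps)
qed

lemma measure_ball_scale: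
  "0 \<le> r \<Longrightarrow> measure lebesgue (ball (0::'a::euclidean_space) r) = r ^ DIM('a) * measure lebesgue (ball (0::'a) 1)"
  using content_ball_conv_unit_ball[of r "0::'a"] by simp

lemma measure_ball_pos: "0 < r \<Longrightarrow> 0 < measure lebesgue (ball (0::'a::euclidean_space) r)"
  using content_ball_pos[of r "0::'a"] by simp

lemma set_integral_indicator_ball:
  fixes S :: "'a::euclidean_space set"
  assumes "S \<in> sets lebesgue"
  shows "set_integrable lebesgue (ball 0 r) (\<lambda>y. indicator S y :: real)"
    and "(LINT y:ball 0 r|lebesgue. (indicator S y :: real)) = measure lebesgue (ball 0 r \<inter> S)"
proof -
  have eq: "(\<lambda>y. indicator (ball 0 r) y *\<^sub>R (indicator S y :: real)) = indicator (ball 0 r \<inter> S)"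
    by (auto simp: indicator_def)
  have "ball 0 r \<inter> S \<in> fmeasurable lebesgue"
    using assms by (intro fmeasurable_Int_fmeasurable) auto
  then show "set_integrable lebesgue (ball 0 r) (\<lambda>y. indicator S y :: real)"
    unfolding set_integrable_def eq by (intro integrable_real_indicator fmeasurableD) (auto simp: fmeasurable_def)
  show "(LINT y:ball 0 r|lebesgue. (indicator S y :: real)) = measure lebesgue (ball 0 r \<inter> S)"
    unfolding set_lebesgue_integral_def eq by simp
qed

lemma LM_quotient_powr:
  fixes f :: "'a::euclidean_space \<Rightarrow> real"
  assumes "0 < p"
  shows "LM_quotient p q f r = (measure lebesgue (ball (0::'a) r) powr (p/q - 1) *
    (LINT y:ball 0 r|lebesgue. \<bar>f y\<bar> powr p)) powr (1/p)"
proof -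
  let ?V = "measure lebesgue (ball (0::'a) r)" and ?I = "LINT y:ball 0 r|lebesgue. \<bar>f y\<bar> powr p"
  have "0 \<le> ?I"
    unfolding set_lebesgue_integral_def by (intro Bochner_Integration.integral_nonneg) auto
  then have "(?V powr (p/q - 1) * ?I) powr (1/p) = (?V powr (p/q - 1)) powr (1/p) * ?I powr (1/p)"
    by (simp add: powr_mult)
  also have "(?V powr (p/q - 1)) powr (1/p) = ?V powr (1/q - 1/p)"
    using assms by (simp add: powr_powr field_simps)
  finally show ?thesis
    unfolding LM_quotient_def by simp
qed

definition ball_atom :: "real \<Rightarrow> 'a::euclidean_space \<Rightarrow> real" where
  "ball_atom q y = measure lebesgue (ball (0::'a) 1) powr (-1/q) * indicator (ball 0 1) y"

definition shell_atom :: "real \<Rightarrow> real \<Rightarrow> 'a::euclidean_space \<Rightarrow> real" where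
  "shell_atom q R y = measure lebesgue (ball (0::'a) R) powr (-1/q) * indicator (ball 0 R - ball 0 1) y"

lemma atoms_measurable [measurable]:
  "ball_atom q \<in> borel_measurable lebesgue" "shell_atom q R \<in> borel_measurable lebesgue"
  unfolding ball_atom_def[abs_def] shell_atom_def[abs_def] by measurable

lemma abs_lincomb_atoms_powr:
  fixes y :: "'a::euclidean_space"
  assumes "1 < R" "0 < p"
  shows "\<bar>a * ball_atom q y + b * shell_atom q R y\<bar> powr p =
    \<bar>a\<bar> powr p * measure lebesgue (ball (0::'a) 1) powr (- (p/q)) * indicator (ball 0 1) y +
    \<bar>b\<bar> powr p * measure lebesgue (ball (0::'a) R) powr (- (p/q)) * indicator (ball 0 R - ball 0 1) y"
  using assms by (auto simp: ball_atom_def shell_atom_def indicator_def abs_mult powr_mult powr_powr)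

lemma lincomb_atoms_integral:
  fixes a b p q R r :: real
  assumes "1 < R" "0 < p"
  shows "set_integrable lebesgue (ball 0 r)
      (\<lambda>y::'a::euclidean_space. \<bar>a * ball_atom q y + b * shell_atom q R y\<bar> powr p)"
    and "(LINT y:ball (0::'a) r|lebesgue. \<bar>a * ball_atom q y + b * shell_atom q R y\<bar> powr p) =
      \<bar>a\<bar> powr p * measure lebesgue (ball (0::'a) 1) powr (- (p/q)) * measure lebesgue (ball (0::'a) r \<inter> ball 0 1) +
      \<bar>b\<bar> powr p * measure lebesgue (ball (0::'a) R) powr (- (p/q)) * measure lebesgue (ball (0::'a) r \<inter> (ball 0 R - ball 0 1))"
  unfolding abs_lincomb_atoms_powr[OF assms(1,2)]
  by (simp_all add: set_integral_indicator_ball)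

lemma LM_quotient_lincomb_atoms_le:
  fixes p q R r a b :: real
  assumes p: "0 < p" and pq: "p < q" and R: "1 < R" and r: "0 < r"
  shows "LM_quotient p q (\<lambda>y::'a::euclidean_space. a * ball_atom q y + b * shell_atom q R y) r
    \<le> max \<bar>a\<bar> \<bar>b\<bar> * (1 + (R ^ DIM('a)) powr (- (p/q) / 2) + (R ^ DIM('a)) powr ((p/q - 1) / 2)) powr (1/p)"
proof -
  define s where "s = p / q"
  define T where "T = R ^ DIM('a)"
  define M where "M = max \<bar>a\<bar> \<bar>b\<bar>"
  define V1 where "V1 = measure lebesgue (ball (0::'a) 1)"
  define VR where "VR = measure lebesgue (ball (0::'a) R)"
  define v where "v = measure lebesgue (ball (0::'a) r)"
  define \<mu>1 where "\<mu>1 = measure lebesgue (ball (0::'a) r \<inter> ball 0 1)"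
  define \<mu>2 where "\<mu>2 = measure lebesgue (ball (0::'a) r \<inter> (ball 0 R - ball 0 1))"
  have s: "0 < s" "s < 1" and T: "1 < T"
    using p pq R by (simp_all add: s_def T_def one_less_power)
  have V1: "0 < V1" and VR: "0 < VR" "v / VR = v / V1 / T" and v: "0 < v"
    using R r T measure_ball_pos[of 1, where 'a='a] measure_ball_pos[OF r] measure_ball_scale[of R, where 'a='a]
    by (simp_all add: V1_def VR_def T_def v_def)
  have "\<mu>1 \<le> v" "\<mu>1 \<le> V1" "\<mu>2 \<le> v" "\<mu>2 \<le> VR"
    unfolding \<mu>1_def \<mu>2_def v_def V1_def VR_def by (intro measure_mono_fmeasurable; auto)+
  then have "V1 powr (- s) * \<mu>1 \<le> V1 powr (- s) * min v V1" "VR powr (- s) * \<mu>2 \<le> VR powr (- s) * min v VR"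
    by (intro mult_left_mono; simp)+
  then have "\<bar>a\<bar> powr p * (V1 powr (- s) * \<mu>1) \<le> M powr p * (V1 powr (- s) * min v V1)"
    and "\<bar>b\<bar> powr p * (VR powr (- s) * \<mu>2) \<le> M powr p * (VR powr (- s) * min v VR)"
    using powr_mono2[of p "\<bar>a\<bar>" M] powr_mono2[of p "\<bar>b\<bar>" M] p
    by (simp_all add: M_def \<mu>1_def \<mu>2_def mult_mono)
  moreover have "(LINT y:ball (0::'a) r|lebesgue. \<bar>a * ball_atom q y + b * shell_atom q R y\<bar> powr p)
      = \<bar>a\<bar> powr p * (V1 powr (- s) * \<mu>1) + \<bar>b\<bar> powr p * (VR powr (- s) * \<mu>2)"
    unfolding lincomb_atoms_integral(2)[OF R p, where 'a='a] by (simp add: s_def V1_def VR_def \<mu>1_def \<mu>2_def mult.assoc)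
  ultimately have "v powr (s - 1) * (LINT y:ball (0::'a) r|lebesgue. \<bar>a * ball_atom q y + b * shell_atom q R y\<bar> powr p)
      \<le> v powr (s - 1) * (M powr p * (V1 powr (- s) * min v V1) + M powr p * (VR powr (- s) * min v VR))"
    by (intro mult_left_mono) simp_all
  also have "\<dots> = M powr p * (v powr (s - 1) * (V1 powr (- s) * min v V1) + v powr (s - 1) * (VR powr (- s) * min v VR))"
    by (simp add: algebra_simps)
  also have "\<dots> = M powr p * ((v / V1) powr (s - 1) * min (v / V1) 1 + (v / V1 / T) powr (s - 1) * min (v / V1 / T) 1)"
    using powr_min_rescale[OF v V1, of s] powr_min_rescale[OF v VR(1), of s] VR(2) by simp
  also have "\<dots> \<le> M powr p * (1 + T powr (- s / 2) + T powr ((s - 1) / 2))"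
    using powr_min_one_sum_le[OF s _ T, of "v / V1"] v V1 by (intro mult_left_mono) auto
  finally have "(v powr (s - 1) * (LINT y:ball (0::'a) r|lebesgue. \<bar>a * ball_atom q y + b * shell_atom q R y\<bar> powr p)) powr (1/p)
      \<le> (M powr p * (1 + T powr (- s / 2) + T powr ((s - 1) / 2))) powr (1/p)"
    using v p by (intro powr_mono2) (auto simp: set_lebesgue_integral_def intro!: Bochner_Integration.integral_nonneg)
  also have "\<dots> = M * (1 + T powr (- s / 2) + T powr ((s - 1) / 2)) powr (1/p)"
    using p by (simp add: M_def powr_mult powr_powr add_nonneg_nonneg)
  finally show ?thesis
    by (simp add: LM_quotient_powr[OF p] v_def s_def M_def T_def)
qed

lemma LM_lincomb_atoms:
  fixes p q R a b :: real
  assumes p: "0 < p" and pq: "p < q" and R: "1 < R"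
  shows "(\<lambda>y::'a::euclidean_space. a * ball_atom q y + b * shell_atom q R y) \<in> LM_set p q"
    and "LM_norm p q (\<lambda>y::'a. a * ball_atom q y + b * shell_atom q R y)
      \<le> max \<bar>a\<bar> \<bar>b\<bar> * (1 + (R ^ DIM('a)) powr (- (p/q) / 2) + (R ^ DIM('a)) powr ((p/q - 1) / 2)) powr (1/p)"
proof -
  note quotient = LM_quotient_lincomb_atoms_le[OF p pq R, where 'a='a, of _ a b]
  show "(\<lambda>y::'a. a * ball_atom q y + b * shell_atom q R y) \<in> LM_set p q"
    by (rule LM_setI[OF _ _ quotient]) (simp_all add: lincomb_atoms_integral(1)[OF R p])
  show "LM_norm p q (\<lambda>y::'a. a * ball_atom q y + b * shell_atom q R y)
      \<le> max \<bar>a\<bar> \<bar>b\<bar> * (1 + (R ^ DIM('a)) powr (- (p/q) / 2) + (R ^ DIM('a)) powr ((p/q - 1) / 2)) powr (1/p)"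
    by (rule LM_norm_le[OF quotient])
qed

lemma powr_pred_mult_powr_minus:
  fixes s V :: real
  assumes "0 < V"
  shows "V powr (s - 1) * V powr (- s) = 1 / V"
  using assms by (simp add: powr_diff powr_minus_divide)

lemma LM_quotient_lincomb_atoms_at_1:
  fixes p q R a b :: real
  assumes p: "0 < p" and R: "1 < R"
  shows "LM_quotient p q (\<lambda>y::'a::euclidean_space. a * ball_atom q y + b * shell_atom q R y) 1 = \<bar>a\<bar>"
proof -
  define V1 where "V1 = measure lebesgue (ball (0::'a) 1)"
  have V1: "0 < V1"
    using measure_ball_pos[of 1, where 'a='a] by (simp add: V1_def)
  have "ball (0::'a) 1 \<inter> (ball 0 R - ball 0 1) = {}"
    by auto
  then have "(LINT y:ball (0::'a) 1|lebesgue. \<bar>a * ball_atom q y + b * shell_atom q R y\<bar> powr p)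
      = \<bar>a\<bar> powr p * V1 powr (- (p/q)) * V1"
    unfolding lincomb_atoms_integral(2)[OF R p, where 'a='a] by (simp add: V1_def)
  then have "LM_quotient p q (\<lambda>y::'a. a * ball_atom q y + b * shell_atom q R y) 1
      = (V1 powr (p/q - 1) * V1 powr (- (p/q)) * V1 * \<bar>a\<bar> powr p) powr (1/p)"
    by (simp add: LM_quotient_powr[OF p] V1_def mult_ac)
  also have "V1 powr (p/q - 1) * V1 powr (- (p/q)) * V1 = 1"
    using powr_pred_mult_powr_minus[OF V1] V1 by simp
  finally show ?thesis
    using p by (simp add: powr_powr)
qed

lemma LM_quotient_lincomb_atoms_at_R_ge:
  fixes p q R a b :: real
  assumes p: "0 < p" and R: "1 < R"
  shows "\<bar>b\<bar> * (1 - 1 / R ^ DIM('a)) powr (1/p)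
    \<le> LM_quotient p q (\<lambda>y::'a::euclidean_space. a * ball_atom q y + b * shell_atom q R y) R"
proof -
  define s where "s = p / q"
  define T where "T = R ^ DIM('a)"
  define V1 where "V1 = measure lebesgue (ball (0::'a) 1)"
  define VR where "VR = measure lebesgue (ball (0::'a) R)"
  have T: "1 < T"
    using R by (simp add: T_def one_less_power)
  have V1: "0 < V1" and VR: "VR = T * V1"
    using R measure_ball_pos[of 1, where 'a='a] measure_ball_scale[of R, where 'a='a] by (simp_all add: V1_def VR_def T_def)
  have sub: "ball (0::'a) 1 \<subseteq> ball 0 R"
    using R by auto
  then have "measure lebesgue (ball (0::'a) R - ball 0 1) = VR - V1"
    unfolding VR_def V1_def using emeasure_lborel_ball_finite[of "0::'a" R] by (intro measure_Diff) auto
  moreover have "ball (0::'a) R \<inter> (ball 0 R - ball 0 1) = ball 0 R - ball 0 1"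
    by auto
  ultimately have "\<bar>b\<bar> powr p * VR powr (- s) * (VR - V1)
      \<le> (LINT y:ball (0::'a) R|lebesgue. \<bar>a * ball_atom q y + b * shell_atom q R y\<bar> powr p)"
    unfolding lincomb_atoms_integral(2)[OF R p, where 'a='a] by (simp add: s_def VR_def)
  then have mono: "VR powr (s - 1) * (\<bar>b\<bar> powr p * VR powr (- s) * (VR - V1))
      \<le> VR powr (s - 1) * (LINT y:ball (0::'a) R|lebesgue. \<bar>a * ball_atom q y + b * shell_atom q R y\<bar> powr p)"
    by (rule mult_left_mono) simp
  have "VR powr (s - 1) * (\<bar>b\<bar> powr p * VR powr (- s) * (VR - V1))
      = \<bar>b\<bar> powr p * ((VR powr (s - 1) * VR powr (- s)) * (VR - V1))"
    by (simp only: mult_ac)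
  also have "(VR powr (s - 1) * VR powr (- s)) * (VR - V1) = 1 - 1 / T"
    using V1 T powr_pred_mult_powr_minus[of VR] by (simp add: VR field_simps)
  finally have "\<bar>b\<bar> powr p * (1 - 1 / T)
      \<le> VR powr (s - 1) * (LINT y:ball (0::'a) R|lebesgue. \<bar>a * ball_atom q y + b * shell_atom q R y\<bar> powr p)"
    using mono by linarith
  then have "(\<bar>b\<bar> powr p * (1 - 1 / T)) powr (1/p)
      \<le> (VR powr (s - 1) * (LINT y:ball (0::'a) R|lebesgue. \<bar>a * ball_atom q y + b * shell_atom q R y\<bar> powr p)) powr (1/p)"
    using p T by (intro powr_mono2) auto
  also have "\<dots> = LM_quotient p q (\<lambda>y::'a. a * ball_atom q y + b * shell_atom q R y) R"
    by (simp add: LM_quotient_powr[OF p] s_def VR_def)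
  finally have "(\<bar>b\<bar> powr p * (1 - 1 / T)) powr (1/p)
      \<le> LM_quotient p q (\<lambda>y::'a. a * ball_atom q y + b * shell_atom q R y) R" .
  then show ?thesis
    using p T by (simp add: T_def powr_mult powr_powr)
qed

lemma LM_lincomb_atoms_norm_ge:
  fixes p q R a b :: real
  assumes p: "0 < p" and pq: "p < q" and R: "1 < R"
  shows "max \<bar>a\<bar> \<bar>b\<bar> * (1 - 1 / R ^ DIM('a)) powr (1/p)
    \<le> LM_norm p q (\<lambda>y::'a::euclidean_space. a * ball_atom q y + b * shell_atom q R y)"
proof -
  let ?g = "\<lambda>y::'a. a * ball_atom q y + b * shell_atom q R y"
  note quotient_le_norm = LM_quotient_le_norm[OF LM_lincomb_atoms(1)[OF p pq R, where 'a='a, of a b]]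
  have "\<bar>a\<bar> \<le> LM_norm p q ?g"
    using quotient_le_norm[of 1] LM_quotient_lincomb_atoms_at_1[OF p R, where 'a='a] by simp
  moreover have "\<bar>b\<bar> * (1 - 1 / R ^ DIM('a)) powr (1/p) \<le> LM_norm p q ?g"
    using quotient_le_norm[of R] LM_quotient_lincomb_atoms_at_R_ge[OF p R, where 'a='a, of b q a] R by linarith
  moreover have "0 \<le> (1 - 1 / R ^ DIM('a)) powr (1/p)" "(1 - 1 / R ^ DIM('a)) powr (1/p) \<le> 1"
    using R p by (simp_all add: powr_le1 one_less_power)
  ultimately show ?thesis
    by (cases "\<bar>b\<bar> \<le> \<bar>a\<bar>") (auto simp: max_def intro: order_trans[OF mult_left_le])
qed

lemma tendsto_LM_atom_bounds:
  fixes p q :: real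
  assumes p: "0 < p" and pq: "p < q" and d: "0 < d"
  shows "((\<lambda>R. (1 - 1 / R ^ d) powr (1/p)) \<longlongrightarrow> 1) at_top"
    and "((\<lambda>R. (1 + (R ^ d) powr (- (p/q) / 2) + (R ^ d) powr ((p/q - 1) / 2)) powr (1/p)) \<longlongrightarrow> 1) at_top"
proof -
  have T: "filterlim (\<lambda>R::real. R ^ d) at_top at_top"
    using d by (intro filterlim_pow_at_top filterlim_ident)
  have "((\<lambda>R. (1 - 1 / R ^ d) powr (1/p)) \<longlongrightarrow> (1 - 0) powr (1/p)) at_top"
    using p tendsto_inverse_0_at_top[OF T] by (intro tendsto_intros) (simp_all add: inverse_eq_divide)
  then show "((\<lambda>R. (1 - 1 / R ^ d) powr (1/p)) \<longlongrightarrow> 1) at_top"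
    by simp
  have "((\<lambda>R. (1 + (R ^ d) powr (- (p/q) / 2) + (R ^ d) powr ((p/q - 1) / 2)) powr (1/p))
      \<longlongrightarrow> (1 + 0 + 0) powr (1/p)) at_top"
    using p pq by (intro tendsto_intros tendsto_neg_powr[OF _ T]) (simp_all add: field_simps)
  then show "((\<lambda>R. (1 + (R ^ d) powr (- (p/q) / 2) + (R ^ d) powr ((p/q - 1) / 2)) powr (1/p)) \<longlongrightarrow> 1) at_top"
    by simp
qed

lemma almost_linf2_LM:
  fixes p q :: real
  assumes p: "0 < p" and pq: "p < q"
  shows "almost_linf2 (LM_set p q :: ('a::euclidean_space \<Rightarrow> real) set) (LM_norm p q)"
  unfolding almost_linf2_def
proof (intro allI impI)
  fix \<epsilon> :: real assume \<epsilon>: "0 < \<epsilon>"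
  define lower where "lower R = (1 - 1 / R ^ DIM('a)) powr (1/p)" for R :: real
  define upper where "upper R = (1 + (R ^ DIM('a)) powr (- (p/q) / 2) + (R ^ DIM('a)) powr ((p/q - 1) / 2)) powr (1/p)"
    for R :: real
  have "\<forall>\<^sub>F R in at_top. 1 - \<epsilon> < lower R"
    unfolding lower_def by (rule order_tendstoD(1)[OF tendsto_LM_atom_bounds(1)[OF p pq]]) (use \<epsilon> in simp_all)
  moreover have "\<forall>\<^sub>F R in at_top. upper R < 1 + \<epsilon>"
    unfolding upper_def by (rule order_tendstoD(2)[OF tendsto_LM_atom_bounds(2)[OF p pq]]) (use \<epsilon> in simp_all)
  ultimately have "\<forall>\<^sub>F R in at_top. 1 - \<epsilon> < lower R \<and> upper R < 1 + \<epsilon> \<and> 1 < R"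
    using eventually_gt_at_top[of 1] by (intro eventually_conj)
  then obtain R0 where "\<forall>R\<ge>R0. 1 - \<epsilon> < lower R \<and> upper R < 1 + \<epsilon> \<and> 1 < R"
    unfolding eventually_at_top_linorder by blast
  then have R: "1 - \<epsilon> < lower R0" "upper R0 < 1 + \<epsilon>" "1 < R0"
    by simp_all
  have "(1 - \<epsilon>) * max \<bar>a\<bar> \<bar>b\<bar> \<le> LM_norm p q (\<lambda>y::'a. a * ball_atom q y + b * shell_atom q R0 y)
    \<and> LM_norm p q (\<lambda>y::'a. a * ball_atom q y + b * shell_atom q R0 y) \<le> (1 + \<epsilon>) * max \<bar>a\<bar> \<bar>b\<bar>" for a b
  proof -
    have "(1 - \<epsilon>) * max \<bar>a\<bar> \<bar>b\<bar> \<le> max \<bar>a\<bar> \<bar>b\<bar> * lower R0"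
      "max \<bar>a\<bar> \<bar>b\<bar> * upper R0 \<le> (1 + \<epsilon>) * max \<bar>a\<bar> \<bar>b\<bar>"
      using R by (simp_all add: mult.commute mult_right_mono)
    then show ?thesis
      using LM_lincomb_atoms_norm_ge[OF p pq R(3), where 'a='a, of a b]
        LM_lincomb_atoms(2)[OF p pq R(3), where 'a='a, of a b]
      unfolding lower_def upper_def by linarith
  qed
  moreover have "(ball_atom q :: 'a \<Rightarrow> real) \<in> LM_set p q" "(shell_atom q R0 :: 'a \<Rightarrow> real) \<in> LM_set p q"
    using LM_lincomb_atoms(1)[OF p pq R(3), of 1 0] LM_lincomb_atoms(1)[OF p pq R(3), of 0 1] by simp_all
  ultimately have "linf2_pair \<epsilon> (LM_set p q) (LM_norm p q) (ball_atom q :: 'a \<Rightarrow> real) (shell_atom q R0)"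
    unfolding linf2_pair_def by blast
  then show "\<exists>u v. linf2_pair \<epsilon> (LM_set p q :: ('a \<Rightarrow> real) set) (LM_norm p q) u v"
    by blast
qed

theorem mainTheorem3:
  fixes p q :: real
  assumes "1 \<le> p" and "p < q"
  shows "C_NJ (LM_set p q :: ('a::euclidean_space \<Rightarrow> real) set) (LM_norm p q) = 2
       \<and> C_J (LM_set p q :: ('a::euclidean_space \<Rightarrow> real) set) (LM_norm p q) = 2
       \<and> C_DW (LM_set p q :: ('a::euclidean_space \<Rightarrow> real) set) (LM_norm p q) = 4"
proof -
  interpret function_seminorm "LM_set p q :: ('a \<Rightarrow> real) set" "LM_norm p q"
    by (rule LM_function_seminorm[OF assms(1)])
  have "almost_linf2 (LM_set p q :: ('a \<Rightarrow> real) set) (LM_norm p q)"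
    using assms by (intro almost_linf2_LM) auto
  then show ?thesis
    using C_NJ_le_2 C_NJ_ge_2 C_J_le_2 C_J_ge_2 C_DW_le_4 C_DW_ge_4 by (simp add: order_antisym)
qed

end
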